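(* For every integer $k\ge 2$: (i) $rc^*(C_{2k}(\{1,k\}))=src^*(C_{2k}(\{1,k\}))=k$; (ii) $rc^*(C_{2k}(\{1,k+1\}))=src^*(C_{2k}(\{1,k+1\}))=k$.
   Context: For $n\ge 2$ and $S\subseteq\{1,\dots,n-1\}$, the circulant digraph $C_n(S)$ has vertex set $\{v_0,\dots,v_{n-1}\}$ and arcs $v_iv_j$ for all $i,j$ with $j-i\equiv s \pmod n$ for some $s\in S$. For a strongly connected digraph $D$ and an arc-colouring $\Gamma:A(D)\to\{1,\dots,k\}$, a directed path is rainbow if its arcs have pairwise distinct colours. $\Gamma$ is rainbow connected if for every ordered pair of distinct vertices $x,y$ there is a rainbow directed $xy$-path; $rc^*(D)$ is the minimum number of colours of such a colouring. $\Gamma$ is strongly rainbow connected if for every ordered pair of distinct vertices $x,y$ there is a rainbow directed $xy$-path of length $d_D(x,y)$; $src^*(D)$ is the minimum such number. *)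

theory Defs
  imports Main
begin

definition circulant_arcs :: "nat \<Rightarrow> nat set \<Rightarrow> (nat \<times> nat) set" where
  "circulant_arcs n S = {(i, j). i < n \<and> j < n \<and> (\<exists>s\<in>S. (int j - int i) mod int n = int s mod int n)}"

definition is_dpath :: "('v \<times> 'v) set \<Rightarrow> 'v list \<Rightarrow> 'v \<Rightarrow> 'v \<Rightarrow> bool" where
  "is_dpath A p x y \<longleftrightarrow> p \<noteq> [] \<and> hd p = x \<and> last p = y \<and> distinct p \<and>
     (\<forall>i < length p - 1. (p ! i, p ! Suc i) \<in> A)"

definition path_arcs :: "'v list \<Rightarrow> ('v \<times> 'v) list" where
  "path_arcs p = zip p (tl p)"

definition dpath_len :: "'v list \<Rightarrow> nat" where
  "dpath_len p = length p - 1"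

definition ddist :: "('v \<times> 'v) set \<Rightarrow> 'v \<Rightarrow> 'v \<Rightarrow> nat" where
  "ddist A x y = (LEAST l. \<exists>p. is_dpath A p x y \<and> dpath_len p = l)"

definition rainbow :: "('v \<times> 'v \<Rightarrow> nat) \<Rightarrow> 'v list \<Rightarrow> bool" where
  "rainbow c p \<longleftrightarrow> distinct (map c (path_arcs p))"

definition arc_colouring :: "('v \<times> 'v) set \<Rightarrow> nat \<Rightarrow> ('v \<times> 'v \<Rightarrow> nat) \<Rightarrow> bool" where
  "arc_colouring A k c \<longleftrightarrow> (\<forall>a\<in>A. c a \<in> {1..k})"

definition rainbow_connected :: "'v set \<Rightarrow> ('v \<times> 'v) set \<Rightarrow> ('v \<times> 'v \<Rightarrow> nat) \<Rightarrow> bool" where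
  "rainbow_connected V A c \<longleftrightarrow>
     (\<forall>x\<in>V. \<forall>y\<in>V. x \<noteq> y \<longrightarrow> (\<exists>p. is_dpath A p x y \<and> rainbow c p))"

definition strongly_rainbow_connected :: "'v set \<Rightarrow> ('v \<times> 'v) set \<Rightarrow> ('v \<times> 'v \<Rightarrow> nat) \<Rightarrow> bool" where
  "strongly_rainbow_connected V A c \<longleftrightarrow>
     (\<forall>x\<in>V. \<forall>y\<in>V. x \<noteq> y \<longrightarrow>
        (\<exists>p. is_dpath A p x y \<and> dpath_len p = ddist A x y \<and> rainbow c p))"

definition rc :: "'v set \<Rightarrow> ('v \<times> 'v) set \<Rightarrow> nat" where
  "rc V A = (LEAST k. \<exists>c. arc_colouring A k c \<and> rainbow_connected V A c)"

definition src :: "'v set \<Rightarrow> ('v \<times> 'v) set \<Rightarrow> nat" where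
  "src V A = (LEAST k. \<exists>c. arc_colouring A k c \<and> strongly_rainbow_connected V A c)"

end

theory Submission
  imports Defs
begin

text \<open>Write \<open>D t\<close> for the distance from \<open>v\<^sub>0\<close> to \<open>v\<^sub>t\<close>, given explicitly for both graphs
  (\<open>t\<close> for \<open>t < k\<close> and \<open>t - k + 1\<close> otherwise in \<open>C\<^sub>2\<^sub>k({1,k})\<close>; \<open>t\<close> for \<open>t \<le> k\<close> and
  \<open>t - k\<close> otherwise in \<open>C\<^sub>2\<^sub>k({1,k+1})\<close>). Since \<open>D\<close> grows by at most one along every arc,
  \<open>v \<mapsto> D(v - x)\<close> is a potential showing that every \<open>xy\<close>-path has length at least \<open>D(y - x)\<close>;
  as \<open>D\<close> attains the value \<open>k\<close>, a rainbow path needs \<open>k\<close> colours. Conversely, colour each arc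
  by its tail modulo \<open>k\<close>: the shortest paths can be chosen so that their \<open>j\<close>-th vertex lies at
  offset \<open>\<equiv> j (mod k)\<close> from the start, so their arcs carry pairwise distinct colours.\<close>

lemma set_path_arcs_subset:
  assumes "is_dpath A p x y"
  shows "set (path_arcs p) \<subseteq> A"
proof
  fix a assume "a \<in> set (path_arcs p)"
  then obtain i where "i < length p - 1" "a = (p ! i, p ! Suc i)"
    by (auto simp: path_arcs_def in_set_conv_nth nth_tl)
  then show "a \<in> A" using assms by (simp add: is_dpath_def)
qed

lemma map_fst_path_arcs: "map fst (path_arcs p) = butlast p"
  by (induction p rule: induct_list012) (auto simp: path_arcs_def)

lemma dpath_potential_bound:
  fixes F :: "'v \<Rightarrow> nat"
  assumes arc: "\<And>u v. (u, v) \<in> A \<Longrightarrow> F v \<le> F u + 1"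
    and p: "is_dpath A p x y"
  shows "F y \<le> F x + dpath_len p"
proof -
  have "F (p ! i) \<le> F x + i" if "i < length p" for i
    using that
  proof (induction i)
    case 0
    then show ?case using p by (simp add: is_dpath_def hd_conv_nth)
  next
    case (Suc i)
    then have "(p ! i, p ! Suc i) \<in> A" using p by (simp add: is_dpath_def)
    then show ?case using Suc arc[of "p ! i" "p ! Suc i"] by simp
  qed
  moreover have "y = p ! (length p - 1)" "p \<noteq> []"
    using p by (auto simp: is_dpath_def last_conv_nth)
  ultimately show ?thesis by (simp add: dpath_len_def)
qed

lemma rainbow_dpath_len_le:
  assumes "arc_colouring A m c" "is_dpath A p x y" "rainbow c p"
  shows "dpath_len p \<le> m"
proof -
  have "dpath_len p = card (set (map c (path_arcs p)))"
    using assms(3) distinct_card by (fastforce simp: rainbow_def dpath_len_def path_arcs_def)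
  also have "\<dots> \<le> card {1..m}"
    using set_path_arcs_subset[OF assms(2)] assms(1)
    by (intro card_mono) (auto simp: arc_colouring_def)
  finally show ?thesis by simp
qed

lemma rc_src_eq_if_far_pair:
  assumes "x \<in> V" "y \<in> V" "x \<noteq> y"
    and far: "\<And>p. is_dpath A p x y \<Longrightarrow> k \<le> dpath_len p"
    and c: "arc_colouring A k c" "strongly_rainbow_connected V A c"
  shows "rc V A = k \<and> src V A = k"
proof -
  have lower: "k \<le> m" if c': "arc_colouring A m c'" "rainbow_connected V A c'" for m c'
  proof -
    obtain p where "is_dpath A p x y" "rainbow c' p"
      using c'(2) assms(1-3) by (auto simp: rainbow_connected_def)
    then show ?thesis using far rainbow_dpath_len_le[OF c'(1)] by (meson le_trans)
  qed
  have src_imp_rc: "rainbow_connected V A c'" if "strongly_rainbow_connected V A c'" for c'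
    using that by (auto simp: strongly_rainbow_connected_def rainbow_connected_def)
  have "rc V A = k"
    unfolding rc_def using c lower src_imp_rc by (intro Least_equality) auto
  moreover have "src V A = k"
    unfolding src_def using c lower src_imp_rc by (intro Least_equality) auto
  ultimately show ?thesis ..
qed

lemma circulant_arcsD:
  assumes "(u, v) \<in> circulant_arcs n S"
  shows "u < n \<and> v < n \<and> (\<exists>s\<in>S. v = (u + s) mod n)"
proof -
  from assms obtain s where s: "s \<in> S" "u < n" "v < n"
    "(int v - int u) mod int n = int s mod int n"
    unfolding circulant_arcs_def by auto
  then have "int v mod int n = (int u + int s) mod int n"
    by (metis add.commute diff_add_cancel mod_add_left_eq)
  then have "int v = int ((u + s) mod n)"
    using s(3) by (simp add: zmod_int)
  then show ?thesis using s by auto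
qed

lemma circulant_arcsI:
  assumes "u < n" "v < n" "s \<in> S" "v mod n = (u + s) mod n"
  shows "(u, v) \<in> circulant_arcs n S"
proof -
  have "(int v - int u) mod int n = ((int u + int s) - int u) mod int n"
    using assms(4) by (metis mod_diff_left_eq of_nat_add zmod_int)
  then show ?thesis using assms unfolding circulant_arcs_def by auto
qed

lemma add_offset_mod_eq:
  fixes x y n :: nat
  assumes "x < n"
  shows "(x + (y + n - x) mod n) mod n = y mod n"
proof -
  have "(x + (y + n - x) mod n) mod n = (x + (y + n - x)) mod n" by (rule mod_add_right_eq)
  also have "\<dots> = y mod n" using assms by simp
  finally show ?thesis .
qed

lemma mod_add_left_cancel_nat:
  "((a::nat) + b) mod n = (a + c) mod n \<longleftrightarrow> b mod n = c mod n"
  by (simp add: nat_mod_eq_iff)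

lemma circulant_dpath_len_ge:
  fixes D :: "nat \<Rightarrow> nat"
  assumes D0: "D 0 = 0"
    and step: "\<And>a s. a < n \<Longrightarrow> s \<in> S \<Longrightarrow> D ((a + s) mod n) \<le> D a + 1"
    and x: "x < n" and p: "is_dpath (circulant_arcs n S) p x y"
  shows "D ((y + n - x) mod n) \<le> dpath_len p"
proof -
  have shift: "a + n - x = a + (n - x)" for a using x by simp
  have "D ((v + n - x) mod n) \<le> D ((u + n - x) mod n) + 1"
    if arc: "(u, v) \<in> circulant_arcs n S" for u v
  proof -
    obtain s where "s \<in> S" "v = (u + s) mod n" using circulant_arcsD[OF arc] by blast
    moreover have "((u + s) mod n + n - x) mod n = ((u + n - x) mod n + s) mod n"
      unfolding shift by (simp add: mod_simps ac_simps)
    ultimately show ?thesis using step[of "(u + n - x) mod n" s] x by simp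
  qed
  from dpath_potential_bound[where F = "\<lambda>v. D ((v + n - x) mod n)", OF this p]
  show ?thesis using D0 by simp
qed

definition circulant_walk :: "nat \<Rightarrow> nat \<Rightarrow> (nat \<Rightarrow> nat) \<Rightarrow> nat \<Rightarrow> nat list" where
  "circulant_walk n x g L = map (\<lambda>j. (x + g j) mod n) [0..<Suc L]"

lemma dpath_len_circulant_walk [simp]: "dpath_len (circulant_walk n x g L) = L"
  by (simp add: circulant_walk_def dpath_len_def)

lemma circulant_walk_is_dpath:
  assumes x: "x < n" and g: "g 0 = 0" "strict_mono_on {..L} g" "g L < n"
    and steps: "\<forall>j<L. g (Suc j) - g j \<in> S"
  shows "is_dpath (circulant_arcs n S) (circulant_walk n x g L) x ((x + g L) mod n)"
  unfolding is_dpath_def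
proof (intro conjI allI impI)
  have below: "g j < n" if "j \<le> L" for j
    using strict_mono_on_leD[OF g(2), of j L] that g(3) by simp
  have "inj_on (\<lambda>j. (x + g j) mod n) {..L}"
  proof (rule inj_onI)
    fix i j assume "i \<in> {..L}" "j \<in> {..L}" "(x + g i) mod n = (x + g j) mod n"
    then have "g i = g j" using below by (simp add: mod_add_left_cancel_nat)
    with \<open>i \<in> {..L}\<close> \<open>j \<in> {..L}\<close> show "i = j"
      using strict_mono_on_imp_inj_on[OF g(2)] by (simp add: inj_on_eq_iff)
  qed
  then show "distinct (circulant_walk n x g L)"
    by (simp add: circulant_walk_def distinct_map atLeast0LessThan lessThan_Suc_atMost
        del: upt_Suc)
  fix i assume "i < length (circulant_walk n x g L) - 1"
  then have i: "i < L" by (simp add: circulant_walk_def)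
  then have "g i < g (Suc i)" using strict_mono_onD[OF g(2)] by simp
  then have "x + g (Suc i) = (x + g i) + (g (Suc i) - g i)" by simp
  then have "(x + g (Suc i)) mod n = ((x + g i) mod n + (g (Suc i) - g i)) mod n"
    by (metis mod_add_left_eq)
  then show "(circulant_walk n x g L ! i, circulant_walk n x g L ! Suc i) \<in> circulant_arcs n S"
    using i x steps
    by (auto simp: circulant_walk_def nth_map simp del: upt_Suc intro!: circulant_arcsI)
qed (use x g(1) in \<open>simp_all add: circulant_walk_def hd_map last_map del: upt_Suc\<close>)

lemma rainbow_circulant_walk:
  assumes "k dvd n" and inj: "inj_on (\<lambda>j. g j mod k) {..<L}"
  shows "rainbow (\<lambda>a. fst a mod k + 1) (circulant_walk n x g L)"
proof -
  have "map (\<lambda>a. fst a mod k + 1) (path_arcs (circulant_walk n x g L))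
        = map (\<lambda>v. v mod k + 1) (butlast (circulant_walk n x g L))"
    by (simp flip: map_fst_path_arcs)
  also have "\<dots> = map (\<lambda>j. (x + g j) mod k + 1) [0..<L]"
    using \<open>k dvd n\<close>
    by (simp add: circulant_walk_def mod_mod_cancel)
  finally have "map (\<lambda>a. fst a mod k + 1) (path_arcs (circulant_walk n x g L))
        = map (\<lambda>j. (x + g j) mod k + 1) [0..<L]" .
  moreover have "inj_on (\<lambda>j. (x + g j) mod k + 1) {0..<L}"
    using inj by (auto simp: inj_on_def mod_add_left_cancel_nat)
  ultimately show ?thesis by (simp add: rainbow_def distinct_map)
qed

lemma circulant_strongly_rainbow_connected:
  fixes D :: "nat \<Rightarrow> nat"
  assumes "k dvd n"
    and D0: "D 0 = 0"
    and step: "\<And>a s. a < n \<Longrightarrow> s \<in> S \<Longrightarrow> D ((a + s) mod n) \<le> D a + 1"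
    and walks: "\<And>t. 0 < t \<Longrightarrow> t < n \<Longrightarrow> \<exists>g. g 0 = 0 \<and> g (D t) = t \<and>
      strict_mono_on {..D t} g \<and> (\<forall>j<D t. g (Suc j) - g j \<in> S) \<and> (\<forall>j<D t. g j mod k = j)"
  shows "strongly_rainbow_connected {0..<n} (circulant_arcs n S) (\<lambda>a. fst a mod k + 1)"
  unfolding strongly_rainbow_connected_def
proof (intro ballI impI)
  fix x y assume xy: "x \<in> {0..<n}" "y \<in> {0..<n}" "x \<noteq> y"
  define t where "t = (y + n - x) mod n"
  have end_point: "(x + t) mod n = y" using xy add_offset_mod_eq[of x n y] by (simp add: t_def)
  have "t \<noteq> 0" using end_point xy by (metis add_0_right atLeastLessThan_iff mod_less)
  then have t: "0 < t" "t < n" using xy by (auto simp: t_def)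
  obtain g where g: "g 0 = 0" "g (D t) = t" "strict_mono_on {..D t} g"
    "\<forall>j<D t. g (Suc j) - g j \<in> S" "\<forall>j<D t. g j mod k = j"
    using walks[OF t] by blast
  let ?p = "circulant_walk n x g (D t)"
  have path: "is_dpath (circulant_arcs n S) ?p x y"
    using circulant_walk_is_dpath[of x n g "D t" S] xy t g end_point by simp
  have "ddist (circulant_arcs n S) x y = D t"
    unfolding ddist_def
  proof (rule Least_equality)
    show "\<exists>p. is_dpath (circulant_arcs n S) p x y \<and> dpath_len p = D t" using path by auto
  qed (use circulant_dpath_len_ge[OF D0 step] xy in \<open>auto simp: t_def\<close>)
  moreover have "rainbow (\<lambda>a. fst a mod k + 1) ?p"
    using \<open>k dvd n\<close> g(5) by (intro rainbow_circulant_walk) (auto intro: inj_onI)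
  ultimately show "\<exists>p. is_dpath (circulant_arcs n S) p x y \<and>
      dpath_len p = ddist (circulant_arcs n S) x y \<and> rainbow (\<lambda>a. fst a mod k + 1) p"
    using path by auto
qed

lemma circulant_rc_src_eq:
  fixes D :: "nat \<Rightarrow> nat"
  assumes "0 < k" "k dvd n"
    and D0: "D 0 = 0"
    and step: "\<And>a s. a < n \<Longrightarrow> s \<in> S \<Longrightarrow> D ((a + s) mod n) \<le> D a + 1"
    and walks: "\<And>t. 0 < t \<Longrightarrow> t < n \<Longrightarrow> \<exists>g. g 0 = 0 \<and> g (D t) = t \<and>
      strict_mono_on {..D t} g \<and> (\<forall>j<D t. g (Suc j) - g j \<in> S) \<and> (\<forall>j<D t. g j mod k = j)"
    and far: "t\<^sub>0 < n" "D t\<^sub>0 = k"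
  shows "rc {0..<n} (circulant_arcs n S) = k \<and> src {0..<n} (circulant_arcs n S) = k"
proof (rule rc_src_eq_if_far_pair)
  show "0 \<noteq> t\<^sub>0" using far D0 \<open>0 < k\<close> by (metis less_irrefl)
  show "k \<le> dpath_len p" if "is_dpath (circulant_arcs n S) p 0 t\<^sub>0" for p
    using circulant_dpath_len_ge[OF D0 step _ that] far by simp
  show "arc_colouring (circulant_arcs n S) k (\<lambda>a. fst a mod k + 1)"
    using \<open>0 < k\<close> by (auto simp: arc_colouring_def Suc_le_eq)
qed (use assms circulant_strongly_rainbow_connected[OF \<open>k dvd n\<close> D0 step walks] in auto)

lemma mod_add_below_twice:
  fixes a s n :: nat
  assumes "a < n" "s \<le> n"
  shows "(a + s) mod n = (if a + s < n then a + s else a + s - n)"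
  using assms by (simp add: mod_if)

lemma rc_src_circulant_1_k:
  assumes "k \<ge> 2"
  shows "rc {0..<2*k} (circulant_arcs (2*k) {1, k}) = k \<and>
         src {0..<2*k} (circulant_arcs (2*k) {1, k}) = k"
proof (rule circulant_rc_src_eq[where D = "\<lambda>a. if a < k then a else a - k + 1" and t\<^sub>0 = "2*k - 1"])
  fix a s assume as: "a < 2*k" "s \<in> {1, k}"
  then have "(a + s) mod (2*k) = (if a + s < 2*k then a + s else a + s - 2*k)"
    using assms by (intro mod_add_below_twice) auto
  then show "(if (a + s) mod (2*k) < k then (a + s) mod (2*k) else (a + s) mod (2*k) - k + 1)
      \<le> (if a < k then a else a - k + 1) + 1"
    using as by auto
next
  fix t assume t: "0 < t" "t < 2*k"
  show "\<exists>g. g 0 = 0 \<and> g (if t < k then t else t - k + 1) = t \<and>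
      strict_mono_on {..if t < k then t else t - k + 1} g \<and>
      (\<forall>j<(if t < k then t else t - k + 1). g (Suc j) - g j \<in> {1, k}) \<and>
      (\<forall>j<(if t < k then t else t - k + 1). g j mod k = j)"
  proof (cases "t < k")
    case True
    then show ?thesis by (intro exI[of _ id]) (auto intro: strict_mono_onI)
  next
    case False
    then show ?thesis using t
      by (intro exI[of _ "\<lambda>j. if j < t - k + 1 then j else t"]) (auto intro!: strict_mono_onI)
  qed
qed (use assms in auto)

lemma rc_src_circulant_1_Suc_k:
  assumes "k \<ge> 2"
  shows "rc {0..<2*k} (circulant_arcs (2*k) {1, k+1}) = k \<and>
         src {0..<2*k} (circulant_arcs (2*k) {1, k+1}) = k"
proof (rule circulant_rc_src_eq[where D = "\<lambda>a. if a \<le> k then a else a - k" and t\<^sub>0 = k])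
  fix a s assume as: "a < 2*k" "s \<in> {1, k+1}"
  then have "(a + s) mod (2*k) = (if a + s < 2*k then a + s else a + s - 2*k)"
    using assms by (intro mod_add_below_twice) auto
  then show "(if (a + s) mod (2*k) \<le> k then (a + s) mod (2*k) else (a + s) mod (2*k) - k)
      \<le> (if a \<le> k then a else a - k) + 1"
    using as by auto
next
  fix t assume t: "0 < t" "t < 2*k"
  show "\<exists>g. g 0 = 0 \<and> g (if t \<le> k then t else t - k) = t \<and>
      strict_mono_on {..if t \<le> k then t else t - k} g \<and>
      (\<forall>j<(if t \<le> k then t else t - k). g (Suc j) - g j \<in> {1, k+1}) \<and>
      (\<forall>j<(if t \<le> k then t else t - k). g j mod k = j)"
  proof (cases "t \<le> k")
    case True
    then show ?thesis by (intro exI[of _ id]) (auto intro: strict_mono_onI)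
  next
    case False
    then show ?thesis using t
      by (intro exI[of _ "\<lambda>j. if j = 0 then 0 else k + j"]) (auto intro!: strict_mono_onI)
  qed
qed (use assms in auto)

theorem theorem9:
  fixes k :: nat
  assumes "k \<ge> 2"
  shows "rc {0..<2*k} (circulant_arcs (2*k) {1, k}) = k \<and>
         src {0..<2*k} (circulant_arcs (2*k) {1, k}) = k \<and>
         rc {0..<2*k} (circulant_arcs (2*k) {1, k+1}) = k \<and>
         src {0..<2*k} (circulant_arcs (2*k) {1, k+1}) = k"
  using rc_src_circulant_1_k[OF assms] rc_src_circulant_1_Suc_k[OF assms] by blast

end
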